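(* For any $C_0>0$, $T>0$ there exist a constant $C(K,C_0)$ and $\bar N=\bar N(T,C_0,L)$ such that the following holds. Let $\rho_{0,L}\in L^1(\mathbb T_L)$ (nonnegative, $c_L=\int_{\mathbb T_L}\rho_{0,L}\le1$) with $\mathcal F_L(\rho_{0,L})\le C_0$, and assume the deterministic particle approximations $\{\rho^N_L\}_{N\ge\bar N}$ starting from $\rho_{0,L}$ are well defined on $[0,T)$. Then $$\sup_{N\ge\bar N}\int_0^T\sum_{k=0}^{N-1}N\,|\phi(\rho_k(t))-\phi(\rho_{k-1}(t))|^2\,dt\le C(K,C_0)(1+T).$$
   Context: Standing assumptions: $K:\mathbb R\to\mathbb R$ satisfies $K(z)=K(|z|)$, $K\in C^0(\mathbb R)\cap C^2(\mathbb R\setminus\{0\})$, $K,K'\in L^\infty(\mathbb R)$, $K''\in L^\infty(\mathbb R\setminus\{0\})$, $\|K'\|_{L^1(\mathbb R)}<\infty$. $W:[0,\infty)\to[0,\infty)$ and $\phi(\rho):=\rho W'(\rho)-W(\rho)$ is $C^1$ with $\phi(0)=0$, $\phi$ strictly increasing, $\phi'(\rho)\rho\le c_0\phi(\rho)$, $\phi(\rho)\le\max\{\rho,c_0W(\rho)\}$ for some $c_0>0$, and there are $c_1,c_2>0$, $\hat\rho<1<\bar\rho$ with $\phi(\rho)\le c_1\rho$ for $\rho\le\hat\rho$ and $\phi(\rho)\ge c_2\rho$ for $\rho\ge\bar\rho$. $\mathbb T_L=\mathbb R/L\mathbb Z\cong[-L/2,L/2)$; $\mathcal F_L(\rho):=\frac12\int_{\mathbb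 T_L}\int_{\mathbb T_L}K(x-y)\rho(x)\rho(y)\,dx\,dy+\int_{\mathbb T_L}W(\rho)\,dx$. Deterministic particle approximation: set $x_0=-L/2$, $x_k=\sup\{x:\int_{x_{k-1}}^x\rho_{0,L}<c_L/N\}$, $k=1,\dots,N$; particles $x_k(t)$ (indices mod $N$) solve $\dot x_k=-\frac{c_L}{N}\sum_{j\ne k}K'(x_k-x_j)-\frac{N}{c_L}[\phi(\rho_k)-\phi(\rho_{k-1})]$, $x_k(0)=x_k$, with $\rho_k(t)=\frac{c_L}{N(x_{k+1}(t)-x_k(t))}$, and $\rho^N_L(t,x)=\sum_{k=0}^{N-1}\rho_k(t)\chi_{[x_k(t),x_{k+1}(t))}(x)$; well-defined on an interval if $x_0(t)<\dots<x_{N-1}(t)$ there. *)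

theory Defs
  imports "HOL-Analysis.Analysis"
begin

text \<open>Torus T_L = R / L Z, identified with the fundamental domain [-L/2, L/2).\<close>
definition torus_dom :: "real \<Rightarrow> real set" where
  "torus_dom L = {-L/2..<L/2}"

text \<open>Representative in [-L/2, L/2) of a difference z taken modulo L.\<close>
definition tred :: "real \<Rightarrow> real \<Rightarrow> real" where
  "tred L z = z - L * of_int \<lfloor>(z + L/2) / L\<rfloor>"

definition phi :: "(real \<Rightarrow> real) \<Rightarrow> (real \<Rightarrow> real) \<Rightarrow> real \<Rightarrow> real" where
  "phi W W' r = r * W' r - W r"

definition cmass :: "real \<Rightarrow> (real \<Rightarrow> real) \<Rightarrow> real" where
  "cmass L \<rho>0 = (LINT x:torus_dom L|lborel. \<rho>0 x)"

definition FL :: "(real \<Rightarrow> real) \<Rightarrow> (real \<Rightarrow> real) \<Rightarrow> real \<Rightarrow> (real \<Rightarrow> real) \<Rightarrow> real" where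
  "FL K W L \<rho> =
     1/2 * (LINT x:torus_dom L|lborel. (LINT y:torus_dom L|lborel. K (tred L (x - y)) * \<rho> x * \<rho> y))
     + (LINT x:torus_dom L|lborel. W (\<rho> x))"

fun init_pos :: "real \<Rightarrow> (real \<Rightarrow> real) \<Rightarrow> nat \<Rightarrow> nat \<Rightarrow> real" where
  "init_pos L \<rho>0 N 0 = - L / 2"
| "init_pos L \<rho>0 N (Suc k) =
     Sup {x. (LBINT y=init_pos L \<rho>0 N k..x. indicator (torus_dom L) y * \<rho>0 y) < cmass L \<rho>0 / real N}"

text \<open>Next particle with periodic convention x_N = x_0 + L.\<close>
definition nxt :: "real \<Rightarrow> nat \<Rightarrow> (nat \<Rightarrow> real) \<Rightarrow> nat \<Rightarrow> real" where
  "nxt L N x k = (if Suc k < N then x (Suc k) else x 0 + L)"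

definition prho :: "real \<Rightarrow> real \<Rightarrow> nat \<Rightarrow> (nat \<Rightarrow> real) \<Rightarrow> nat \<Rightarrow> real" where
  "prho L c N x k = c / (real N * (nxt L N x k - x k))"

text \<open>rho_(k-1), indices mod N (so rho_(-1) = rho_(N-1)).\<close>
definition prho_prev :: "real \<Rightarrow> real \<Rightarrow> nat \<Rightarrow> (nat \<Rightarrow> real) \<Rightarrow> nat \<Rightarrow> real" where
  "prho_prev L c N x k = prho L c N x (if k = 0 then N - 1 else k - 1)"

definition particle_solution ::
  "(real \<Rightarrow> real) \<Rightarrow> (real \<Rightarrow> real) \<Rightarrow> real \<Rightarrow> (real \<Rightarrow> real) \<Rightarrow> nat \<Rightarrow> real
    \<Rightarrow> (nat \<Rightarrow> real \<Rightarrow> real) \<Rightarrow> bool" where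
  "particle_solution K' \<phi> L \<rho>0 N T x \<longleftrightarrow>
     (let c = cmass L \<rho>0 in
      (\<forall>k<N. x k 0 = init_pos L \<rho>0 N k) \<and>
      (\<forall>t\<in>{0..<T}. (\<forall>k. Suc k < N \<longrightarrow> x k t < x (Suc k) t) \<and> x (N - 1) t < x 0 t + L) \<and>
      (\<forall>k<N. \<forall>t\<in>{0..<T}.
         ((\<lambda>s. x k s) has_real_derivative
            (- (c / real N) * (\<Sum>j\<in>{..<N} - {k}. K' (tred L (x k t - x j t)))
             - (real N / c) * (\<phi> (prho L c N (\<lambda>i. x i t) k) - \<phi> (prho_prev L c N (\<lambda>i. x i t) k))))
         (at t within {0..<T})))"

end

theory Submission
  imports Defs
begin

(*
  The internal energy E(t) = sum_k (x_(k+1) - x_k) W(rho_k) of the particle system dissipates.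
  A discrete integration by parts gives E' = sum_k x_k' (phi(rho_k) - phi(rho_(k-1))); inserting
  the velocity and applying Young's inequality to the interaction drift yields
  2 c E' <= c^4 |K'|_oo^2 - sum_k N |phi(rho_k) - phi(rho_(k-1))|^2, so integrating in time bounds
  the dissipation on [0, t] by 2 c E(0) + c^4 |K'|_oo^2 t. Since phi = r W' - W is increasing,
  W lies above its tangents, and Jensen's inequality on each initial cell (each carries mass c/N)
  gives E(0) <= int W(rho_0). Finally the interaction part of F_L is at least -|K|_oo / 2
  because c <= 1, so C = 2 C0 + |K|_oo + |K'|_oo^2 and Nbar = 1 work.
*)

section \<open>Convexity of the internal energy density\<close>

lemma DERIV_at_within_atLeast_imp_at:
  fixes f :: "real \<Rightarrow> real"
  assumes "(f has_real_derivative D) (at r within {a..})" and "a < r"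
  shows "(f has_real_derivative D) (at r)"
proof -
  have "at r within {a..} = at r"
    by (rule at_within_interior) (use assms(2) in auto)
  with assms(1) show ?thesis by simp
qed

lemma DERIV_within_atLeast_imp_continuous_on_greaterThan:
  fixes f f' :: "real \<Rightarrow> real"
  assumes "\<forall>r\<ge>0. (f has_real_derivative f' r) (at r within {0..})"
  shows "continuous_on {0<..} f"
proof (intro continuous_at_imp_continuous_on ballI)
  fix r :: real assume "r \<in> {0<..}"
  then show "isCont f r"
    using DERIV_at_within_atLeast_imp_at[of f "f' r" r 0] assms by (auto intro: DERIV_isCont)
qed

lemma tangent_le_of_phi_strict_mono:
  fixes W W' :: "real \<Rightarrow> real"
  assumes W_deriv: "\<forall>r\<ge>0. (W has_real_derivative W' r) (at r within {0..})"
    and phi_0: "phi W W' 0 = 0" and phi_mono: "strict_mono_on {0..} (phi W W')"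
    and W_nonneg: "\<forall>r\<ge>0. W r \<ge> 0"
    and m: "m > 0" and y: "y \<ge> 0"
  shows "W m + W' m * (y - m) \<le> W y"
proof (cases "y = 0")
  case True
  have "phi W W' 0 < phi W W' m" using phi_mono m by (auto simp: strict_mono_on_def)
  with True W_nonneg phi_0 show ?thesis by (auto simp: phi_def algebra_simps)
next
  case False
  with y have y_pos: "y > 0" by simp
  define u where "u z = (W z - W m - W' m * (z - m)) / z" for z
  \<comment> \<open>The derivative of u has the sign of z - m, so u is minimal at m, where it vanishes.\<close>
  have u_deriv: "(u has_real_derivative (phi W W' z - phi W W' m) / z\<^sup>2) (at z)" if "z > 0" for z
  proof -
    have W_at: "(W has_real_derivative W' z) (at z)"
      using DERIV_at_within_atLeast_imp_at[of W "W' z" z 0] W_deriv that by simp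
    have "(u has_real_derivative
        ((W' z - W' m) * z - (W z - W m - W' m * (z - m)) * 1) / (z * z)) (at z)"
      unfolding u_def by (rule derivative_eq_intros W_at refl | use that in simp)+
    moreover have "((W' z - W' m) * z - (W z - W m - W' m * (z - m)) * 1) / (z * z)
        = (phi W W' z - phi W W' m) / z\<^sup>2"
      by (simp add: phi_def power2_eq_square algebra_simps)
    ultimately show ?thesis by simp
  qed
  have phi_le: "phi W W' a \<le> phi W W' b" if "0 \<le> a" "a \<le> b" for a b
    using phi_mono that by (cases "a = b") (auto simp: strict_mono_on_def intro: less_imp_le)
  have "u m \<le> u y"
  proof (cases "m \<le> y")
    case True
    then show ?thesis
      using phi_le[of m] m by (intro deriv_nonneg_imp_mono[OF u_deriv]) auto
  next
    case False
    then show ?thesis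
      using phi_le[of _ m] y_pos by (intro deriv_nonpos_imp_antimono[OF u_deriv]) (auto simp: divide_nonpos_nonneg)
  qed
  then have "0 \<le> (W y - W m - W' m * (y - m)) / y" by (simp add: u_def)
  with y_pos show ?thesis by (simp add: zero_le_divide_iff)
qed

lemma interval_integral_split:
  fixes f :: "real \<Rightarrow> real" and a b c :: real
  assumes "integrable lborel f"
  shows "(LBINT x=a..b. f x) + (LBINT x=b..c. f x) = (LBINT x=a..c. f x)"
  by (rule interval_integral_sum)
     (use integrable_mult_indicator[OF _ assms] in \<open>simp add: interval_lebesgue_integrable_def set_integrable_def\<close>)

lemma interval_integral_eq_integral_Icc:
  fixes f :: "real \<Rightarrow> real" and a b :: real
  assumes "integrable lborel f" and "a \<le> b"
  shows "(LBINT x=a..b. f x) = integral {a..b} f" and "f integrable_on {a..b}"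
proof -
  have f_ab: "set_integrable lborel {a..b} f"
    using integrable_mult_indicator[of "{a..b}" lborel f] assms(1) by (simp add: set_integrable_def)
  show "(LBINT x=a..b. f x) = integral {a..b} f"
    by (rule interval_integral_eq_integral[OF assms(2) f_ab])
  show "f integrable_on {a..b}" by (rule set_borel_integral_eq_integral(1)[OF f_ab])
qed

lemma isCont_interval_integral_upper:
  fixes f :: "real \<Rightarrow> real" and a x0 :: real
  assumes f: "integrable lborel f"
  shows "isCont (\<lambda>x::real. LBINT y=a..x. f y) x0"
proof -
  define p where "p = min a x0 - 1"
  define q where "q = max a x0 + 1"
  have "(LBINT y=a..x. f y) = integral {p..x} f - integral {p..a} f" if "x \<in> {p..q}" for x
    using interval_integral_split[OF f, of p a x] interval_integral_eq_integral_Icc(1)[OF f]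
      that by (simp add: p_def)
  moreover have "continuous_on {p..q} (\<lambda>x. integral {p..x} f - integral {p..a} f)"
    by (intro continuous_intros indefinite_integral_continuous_1 interval_integral_eq_integral_Icc(2)[OF f])
       (simp add: p_def q_def)
  ultimately have "continuous_on {p..q} (\<lambda>x. LBINT y=a..x. f y)"
    using continuous_on_eq by force
  moreover have "x0 \<in> interior {p..q}" by (simp add: p_def q_def min_def max_def)
  ultimately show ?thesis by (rule continuous_on_interior)
qed

section \<open>The initial particle configuration\<close>

lemma Sup_sublevel_set_eq_level:
  fixes G :: "real \<Rightarrow> real"
  assumes cont: "\<And>x. isCont G x" and below: "G l < v" and above: "\<And>x. h \<le> x \<Longrightarrow> v \<le> G x"
  shows "G (Sup {x. G x < v}) = v"
proof -
  define S where "S = {x. G x < v}"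
  have G_cont: "continuous_on UNIV G" by (simp add: cont continuous_at_imp_continuous_on)
  have S_bound: "\<forall>a\<in>S. a < h" using above by (force simp: S_def not_le[symmetric])
  have "Sup S \<notin> S"
    by (rule Sup_notin_open) (use open_Collect_less[OF G_cont] S_bound in \<open>auto simp: S_def\<close>)
  moreover have "Sup S \<in> {x. G x \<le> v}"
    by (rule closed_subset_contains_Sup)
       (use closed_Collect_le[OF G_cont continuous_on_const] below S_bound in
          \<open>auto simp: S_def bdd_above_def intro: less_imp_le\<close>)
  ultimately show ?thesis by (simp add: S_def)
qed

lemma interval_integral_torus_dom:
  fixes f :: "real \<Rightarrow> real" and L x :: real
  assumes L: "L > 0" and x: "L/2 \<le> x"
  shows "(LBINT y=-L/2..x. indicator (torus_dom L) y * f y) = (LINT y:torus_dom L|lborel. f y)"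
proof -
  have "(LBINT y=-L/2..x. indicator (torus_dom L) y * f y)
      = (LINT y:{-L/2..x}|lborel. indicator (torus_dom L) y * f y)"
    using L x by (intro interval_integral_Icc) simp
  also have "\<dots> = (LINT y:torus_dom L|lborel. f y)"
    unfolding set_lebesgue_integral_def
    by (rule Bochner_Integration.integral_cong[OF refl])
       (use L x in \<open>auto simp: torus_dom_def indicator_def\<close>)
  finally show ?thesis .
qed

lemma init_pos_cumulative_mass:
  fixes \<rho>0 :: "real \<Rightarrow> real" and L :: real and N :: nat
  assumes L: "L > 0" and nonneg: "\<forall>y\<in>torus_dom L. \<rho>0 y \<ge> 0"
    and \<rho>0_int: "set_integrable lborel (torus_dom L) \<rho>0"
    and c_pos: "cmass L \<rho>0 > 0" and N: "N \<ge> 1" and k: "k \<le> N"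
  shows "(LBINT y=-L/2..init_pos L \<rho>0 N k. indicator (torus_dom L) y * \<rho>0 y)
           = real k * cmass L \<rho>0 / real N"
  using k
proof (induction k)
  case (Suc k)
  define c where "c = cmass L \<rho>0"
  define G where "G x = (LBINT y=-L/2..x. indicator (torus_dom L) y * \<rho>0 y)" for x :: real
  have \<rho>_int: "integrable lborel (\<lambda>y. indicator (torus_dom L) y * \<rho>0 y)"
    using \<rho>0_int by (simp add: set_integrable_def)
  have G_diff: "(LBINT y=a..x. indicator (torus_dom L) y * \<rho>0 y) = G x - G a" for a x :: real
    using interval_integral_split[OF \<rho>_int, of "-L/2" a x] by (simp add: G_def)
  have IH: "G (init_pos L \<rho>0 N k) = real k * c / real N"
    using Suc by (simp add: G_def c_def)
  have step: "real (Suc k) * c / real N = real k * c / real N + c / real N"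
    by (simp add: add_divide_distrib distrib_right)
  have "{x. (LBINT y=init_pos L \<rho>0 N k..x. indicator (torus_dom L) y * \<rho>0 y) < c / real N}
      = {x. G x < real (Suc k) * c / real N}"
    by (rule Collect_cong) (simp only: G_diff IH step; linarith)
  moreover have "G (Sup {x. G x < real (Suc k) * c / real N}) = real (Suc k) * c / real N"
  proof (rule Sup_sublevel_set_eq_level)
    show "isCont G x" for x
      unfolding G_def by (rule isCont_interval_integral_upper[OF \<rho>_int])
    show "G (-L/2) < real (Suc k) * c / real N"
      using c_pos N by (simp add: G_def c_def)
    have "real (Suc k) * c \<le> real N * c"
      using Suc.prems c_pos by (intro mult_right_mono) (auto simp: c_def)
    then have "real (Suc k) * c / real N \<le> c"
      using N by (simp add: divide_le_eq mult.commute)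
    then show "real (Suc k) * c / real N \<le> G x" if "L/2 \<le> x" for x
      using interval_integral_torus_dom[OF L that] by (simp add: G_def c_def cmass_def)
  qed
  ultimately show ?case by (simp add: G_def c_def)
qed simp

lemma init_pos_cell_mass:
  fixes \<rho>0 :: "real \<Rightarrow> real" and L :: real and N :: nat
  assumes L: "L > 0" and nonneg: "\<forall>y\<in>torus_dom L. \<rho>0 y \<ge> 0"
    and \<rho>0_int: "set_integrable lborel (torus_dom L) \<rho>0"
    and c_pos: "cmass L \<rho>0 > 0" and N: "N \<ge> 1" and k: "k < N"
  shows "(LBINT y=init_pos L \<rho>0 N k..(if Suc k < N then init_pos L \<rho>0 N (Suc k) else L/2).
            indicator (torus_dom L) y * \<rho>0 y) = cmass L \<rho>0 / real N"
proof -
  define c where "c = cmass L \<rho>0"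
  define b where "b = (if Suc k < N then init_pos L \<rho>0 N (Suc k) else L/2)"
  define \<rho> where "\<rho> y = indicator (torus_dom L) y * \<rho>0 y" for y
  have \<rho>_int: "integrable lborel \<rho>" using \<rho>0_int by (simp add: set_integrable_def \<rho>_def[abs_def])
  have "(LBINT y=-L/2..b. \<rho> y) = real (Suc k) * c / real N"
  proof (cases "Suc k < N")
    case True
    then show ?thesis
      using init_pos_cumulative_mass[OF L nonneg \<rho>0_int c_pos N, of "Suc k"] by (simp add: b_def \<rho>_def c_def)
  next
    case False
    with k have "Suc k = N" by simp
    with False N show ?thesis
      using interval_integral_torus_dom[OF L, of "L/2" \<rho>0] by (simp add: b_def \<rho>_def c_def cmass_def)
  qed
  moreover have "(LBINT y=-L/2..init_pos L \<rho>0 N k. \<rho> y) = real k * c / real N"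
    using init_pos_cumulative_mass[OF L nonneg \<rho>0_int c_pos N, of k] k by (simp add: \<rho>_def c_def)
  ultimately have "(LBINT y=init_pos L \<rho>0 N k..b. \<rho> y) = real (Suc k) * c / real N - real k * c / real N"
    using interval_integral_split[OF \<rho>_int, of "-L/2" "init_pos L \<rho>0 N k" b] by simp
  also have "\<dots> = c / real N" by (simp add: diff_divide_distrib[symmetric] algebra_simps)
  finally show ?thesis by (simp add: b_def \<rho>_def c_def)
qed

lemma jensen_on_cell:
  fixes W W' \<rho>0 :: "real \<Rightarrow> real" and a b \<mu> L :: real
  assumes W_deriv: "\<forall>r\<ge>0. (W has_real_derivative W' r) (at r within {0..})"
    and phi_0: "phi W W' 0 = 0" and phi_mono: "strict_mono_on {0..} (phi W W')"
    and W_nonneg: "\<forall>r\<ge>0. W r \<ge> 0"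
    and nonneg: "\<forall>y\<in>torus_dom L. \<rho>0 y \<ge> 0"
    and \<rho>_int: "integrable lborel (\<lambda>y. indicator (torus_dom L) y * \<rho>0 y)"
    and W\<rho>_int: "integrable lborel (\<lambda>y. indicator (torus_dom L) y * W (\<rho>0 y))"
    and ab: "a < b" and \<mu>: "\<mu> > 0"
    and mass: "(LBINT y=a..b. indicator (torus_dom L) y * \<rho>0 y) = \<mu>"
  shows "(b - a) * W (\<mu> / (b - a)) \<le> (LBINT y=a..b. indicator (torus_dom L) y * W (\<rho>0 y))"
proof -
  define \<rho> where "\<rho> y = indicator (torus_dom L) y * \<rho>0 y" for y
  define w where "w y = indicator (torus_dom L) y * W (\<rho>0 y)" for y
  define m where "m = \<mu> / (b - a)"
  have m_pos: "m > 0" using ab \<mu> by (simp add: m_def)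
  have "0 < phi W W' m"
    using phi_mono m_pos phi_0 unfolding strict_mono_on_def by (metis atLeast_iff order_refl less_imp_le)
  \<comment> \<open>Outside the torus \<rho> and w vanish, and the tangent at m is -phi m < 0 there.\<close>
  then have tangent: "W m - W' m * m + W' m * \<rho> y \<le> w y" for y
    using tangent_le_of_phi_strict_mono[OF W_deriv phi_0 phi_mono W_nonneg m_pos, of "\<rho>0 y"] nonneg
    by (cases "y \<in> torus_dom L") (auto simp: \<rho>_def w_def phi_def algebra_simps)
  have "a \<le> b" using ab by simp
  note \<rho>_Icc = interval_integral_eq_integral_Icc[OF \<rho>_int this, folded \<rho>_def]
  note w_Icc = interval_integral_eq_integral_Icc[OF W\<rho>_int \<open>a \<le> b\<close>]
  have tangent_int: "(\<lambda>y. (W m - W' m * m) + W' m * \<rho> y) integrable_on {a..b}"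
    using integrable_add[OF integrable_const_ivl integrable_on_cmult_left[OF \<rho>_Icc(2), of "W' m"]] by simp
  have "integral {a..b} (\<lambda>y. (W m - W' m * m) + W' m * \<rho> y) = (b - a) * (W m - W' m * m) + W' m * \<mu>"
    using integral_add[OF integrable_const_ivl integrable_on_cmult_left[OF \<rho>_Icc(2), of "W' m"]]
      \<rho>_Icc(1) mass \<open>a \<le> b\<close> by (simp add: \<rho>_def)
  also have "\<dots> = (b - a) * W m"
    using ab by (simp add: m_def field_simps)
  finally have "(b - a) * W m = integral {a..b} (\<lambda>y. (W m - W' m * m) + W' m * \<rho> y)" ..
  also have "\<dots> \<le> integral {a..b} w"
    by (rule integral_le[OF tangent_int w_Icc(2)[folded w_def]]) (use tangent in auto)
  finally show ?thesis by (simp add: w_Icc(1) w_def[abs_def] m_def)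
qed

definition particle_internal_energy ::
  "(real \<Rightarrow> real) \<Rightarrow> real \<Rightarrow> real \<Rightarrow> nat \<Rightarrow> (nat \<Rightarrow> real) \<Rightarrow> real" where
  "particle_internal_energy W L c N y = (\<Sum>k<N. (nxt L N y k - y k) * W (prho L c N y k))"

lemma particle_internal_energy_init_le:
  fixes W W' \<rho>0 :: "real \<Rightarrow> real" and L :: real and N :: nat and y :: "nat \<Rightarrow> real"
  assumes W_deriv: "\<forall>r\<ge>0. (W has_real_derivative W' r) (at r within {0..})"
    and phi_0: "phi W W' 0 = 0" and phi_mono: "strict_mono_on {0..} (phi W W')"
    and W_nonneg: "\<forall>r\<ge>0. W r \<ge> 0"
    and L: "L > 0" and nonneg: "\<forall>y\<in>torus_dom L. \<rho>0 y \<ge> 0"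
    and \<rho>0_int: "set_integrable lborel (torus_dom L) \<rho>0"
    and W\<rho>0_int: "set_integrable lborel (torus_dom L) (\<lambda>y. W (\<rho>0 y))"
    and c_pos: "cmass L \<rho>0 > 0" and N: "N \<ge> 1"
    and init: "\<forall>k<N. y k = init_pos L \<rho>0 N k"
    and ordered: "\<forall>k. Suc k < N \<longrightarrow> y k < y (Suc k)" and wrap: "y (N - 1) < y 0 + L"
  shows "particle_internal_energy W L (cmass L \<rho>0) N y \<le> (LINT x:torus_dom L|lborel. W (\<rho>0 x))"
proof -
  define c where "c = cmass L \<rho>0"
  define \<rho> where "\<rho> y = indicator (torus_dom L) y * \<rho>0 y" for y
  define w where "w y = indicator (torus_dom L) y * W (\<rho>0 y)" for y
  define H where "H x = (LBINT y=-L/2..x. w y)" for x :: real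
  \<comment> \<open>Cell endpoints; the right end of the last cell is x_0 + L = L/2.\<close>
  define X where "X k = (if k < N then y k else L/2)" for k
  have \<rho>_int: "integrable lborel \<rho>" using \<rho>0_int by (simp add: set_integrable_def \<rho>_def[abs_def])
  have w_int: "integrable lborel w" using W\<rho>0_int by (simp add: set_integrable_def w_def[abs_def])
  have y0: "y 0 = - L / 2" using init N by auto
  have nxt_X: "nxt L N y k = X (Suc k)" and y_X: "y k = X k" if "k < N" for k
    using that y0 by (auto simp: nxt_def X_def)
  have X_less: "X k < X (Suc k)" if "k < N" for k
  proof (cases "Suc k < N")
    case False
    with that have "k = N - 1" by simp
    with wrap y0 False N show ?thesis by (simp add: X_def)
  qed (use ordered in \<open>simp add: X_def\<close>)
  have cell: "(nxt L N y k - y k) * W (prho L c N y k) \<le> H (X (Suc k)) - H (X k)" if k: "k < N" for k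
  proof -
    have "X k = init_pos L \<rho>0 N k" "X (Suc k) = (if Suc k < N then init_pos L \<rho>0 N (Suc k) else L/2)"
      using init k by (simp_all add: X_def del: init_pos.simps)
    then have "(LBINT y=X k..X (Suc k). \<rho> y) = c / real N"
      using init_pos_cell_mass[OF L nonneg \<rho>0_int c_pos N k] by (simp add: \<rho>_def c_def del: init_pos.simps)
    then have "(X (Suc k) - X k) * W ((c / real N) / (X (Suc k) - X k)) \<le> (LBINT y=X k..X (Suc k). w y)"
      using jensen_on_cell[OF W_deriv phi_0 phi_mono W_nonneg nonneg, of "X k" "X (Suc k)" "c / real N"]
        \<rho>_int w_int X_less[OF k] c_pos N by (simp add: \<rho>_def[abs_def] w_def[abs_def] c_def)
    moreover have "(LBINT y=X k..X (Suc k). w y) = H (X (Suc k)) - H (X k)"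
      using interval_integral_split[OF w_int, of "-L/2" "X k" "X (Suc k)"] by (simp add: H_def)
    ultimately show ?thesis by (simp add: prho_def nxt_X[OF k] y_X[OF k])
  qed
  have "particle_internal_energy W L c N y \<le> (\<Sum>k<N. H (X (Suc k)) - H (X k))"
    unfolding particle_internal_energy_def by (rule sum_mono) (use cell in auto)
  also have "\<dots> = H (X N) - H (X 0)" by (rule sum_lessThan_telescope)
  also have "\<dots> = (LINT x:torus_dom L|lborel. W (\<rho>0 x))"
    using interval_integral_torus_dom[OF L, of "L/2" "\<lambda>x. W (\<rho>0 x)"] N y0
    by (simp add: H_def X_def w_def)
  finally show ?thesis by (simp add: c_def)
qed

lemma cmass_nonneg:
  assumes "\<forall>y\<in>torus_dom L. \<rho>0 y \<ge> 0"
  shows "cmass L \<rho>0 \<ge> 0"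
  unfolding cmass_def set_lebesgue_integral_def
  by (rule integral_nonneg_AE) (use assms in \<open>auto simp: indicator_def\<close>)

(* Unlike integral_abs_bound_integral this needs no integrability of f (otherwise its integral
   is 0), which spares proving measurability of the interaction kernel K o tred. *)
lemma abs_integral_le_integral_of_abs_le:
  fixes f g :: "real \<Rightarrow> real"
  assumes g: "integrable lborel g" and bound: "\<And>x. \<bar>f x\<bar> \<le> g x"
  shows "\<bar>integral\<^sup>L lborel f\<bar> \<le> integral\<^sup>L lborel g"
proof (cases "integrable lborel f")
  case True
  then show ?thesis using integral_abs_bound_integral[OF True g] bound by simp
next
  case False
  then have "integral\<^sup>L lborel f = 0" by (rule not_integrable_integral_eq)
  moreover have "integral\<^sup>L lborel g \<ge> 0"
    by (rule integral_nonneg_AE) (use bound in \<open>auto intro: order_trans[OF abs_ge_zero]\<close>)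
  ultimately show ?thesis by simp
qed

lemma abs_interaction_potential_le:
  fixes K \<rho>0 :: "real \<Rightarrow> real" and L M x :: real
  assumes K_bound: "\<forall>z. \<bar>K z\<bar> \<le> M"
    and nonneg: "\<forall>y\<in>torus_dom L. \<rho>0 y \<ge> 0"
    and \<rho>0_int: "set_integrable lborel (torus_dom L) \<rho>0" and x: "x \<in> torus_dom L"
  shows "\<bar>LINT y:torus_dom L|lborel. K (tred L (x - y)) * \<rho>0 x * \<rho>0 y\<bar> \<le> M * \<rho>0 x * cmass L \<rho>0"
proof -
  define \<rho> where "\<rho> y = indicator (torus_dom L) y * \<rho>0 y" for y
  have \<rho>_int: "integrable lborel \<rho>" using \<rho>0_int by (simp add: set_integrable_def \<rho>_def[abs_def])
  have "\<bar>LINT y:torus_dom L|lborel. K (tred L (x - y)) * \<rho>0 x * \<rho>0 y\<bar>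
      \<le> integral\<^sup>L lborel (\<lambda>y. M * \<rho>0 x * \<rho> y)"
    unfolding set_lebesgue_integral_def
  proof (rule abs_integral_le_integral_of_abs_le)
    show "integrable lborel (\<lambda>y. M * \<rho>0 x * \<rho> y)" using \<rho>_int by simp
    fix y
    have "\<bar>K (tred L (x - y))\<bar> * (\<rho>0 x * \<rho> y) \<le> M * (\<rho>0 x * \<rho> y)"
      using K_bound nonneg x by (intro mult_right_mono) (auto simp: \<rho>_def indicator_def)
    then show "\<bar>indicator (torus_dom L) y *\<^sub>R (K (tred L (x - y)) * \<rho>0 x * \<rho>0 y)\<bar> \<le> M * \<rho>0 x * \<rho> y"
      using nonneg x by (auto simp: \<rho>_def indicator_def abs_mult)
  qed
  also have "\<dots> = M * \<rho>0 x * cmass L \<rho>0"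
    by (simp add: cmass_def set_lebesgue_integral_def \<rho>_def[abs_def])
  finally show ?thesis .
qed

lemma internal_energy_le_FL:
  fixes K W \<rho>0 :: "real \<Rightarrow> real" and L M :: real
  assumes K_bound: "\<forall>z. \<bar>K z\<bar> \<le> M"
    and nonneg: "\<forall>y\<in>torus_dom L. \<rho>0 y \<ge> 0"
    and \<rho>0_int: "set_integrable lborel (torus_dom L) \<rho>0"
    and mass_le_1: "cmass L \<rho>0 \<le> 1"
  shows "(LINT x:torus_dom L|lborel. W (\<rho>0 x)) \<le> FL K W L \<rho>0 + M / 2"
proof -
  define c where "c = cmass L \<rho>0"
  define h where "h x = (LINT y:torus_dom L|lborel. K (tred L (x - y)) * \<rho>0 x * \<rho>0 y)" for x
  have \<rho>_int: "integrable lborel (\<lambda>x. indicator (torus_dom L) x * \<rho>0 x)"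
    using \<rho>0_int by (simp add: set_integrable_def)
  have c: "0 \<le> c" "c \<le> 1" using cmass_nonneg[OF nonneg] mass_le_1 by (auto simp: c_def)
  have M: "M \<ge> 0" using K_bound by (metis abs_ge_zero order_trans)
  have "\<bar>LINT x:torus_dom L|lborel. h x\<bar> \<le> integral\<^sup>L lborel (\<lambda>x. M * c * (indicator (torus_dom L) x * \<rho>0 x))"
    unfolding set_lebesgue_integral_def
  proof (rule abs_integral_le_integral_of_abs_le)
    show "\<bar>indicator (torus_dom L) x *\<^sub>R h x\<bar> \<le> M * c * (indicator (torus_dom L) x * \<rho>0 x)" for x
      using abs_interaction_potential_le[OF K_bound nonneg \<rho>0_int, of x]
      by (cases "x \<in> torus_dom L") (simp_all add: h_def c_def mult_ac)
  qed (use \<rho>_int in simp)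
  also have "\<dots> = M * c * c" by (simp add: c_def cmass_def set_lebesgue_integral_def)
  also have "\<dots> \<le> M" using M c by (simp add: mult_le_one mult.assoc mult_left_le)
  finally have "(LINT x:torus_dom L|lborel. h x) \<ge> - M" by linarith
  moreover have "FL K W L \<rho>0 = 1/2 * (LINT x:torus_dom L|lborel. h x) + (LINT x:torus_dom L|lborel. W (\<rho>0 x))"
    by (simp add: FL_def h_def)
  ultimately show ?thesis by linarith
qed

section \<open>Energy dissipation along the particle flow\<close>

lemma cell_energy_has_real_derivative:
  fixes W W' g :: "real \<Rightarrow> real"
  assumes W_deriv: "\<forall>r\<ge>0. (W has_real_derivative W' r) (at r within {0..})"
    and g: "(g has_real_derivative D) (at s)" and g_pos: "g s > 0" and a: "a > 0"
  shows "((\<lambda>s. g s * W (a / g s)) has_real_derivative - D * phi W W' (a / g s)) (at s)"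
proof -
  have W_at: "(W has_real_derivative W' (a / g s)) (at (a / g s))"
    using DERIV_at_within_atLeast_imp_at[of W _ "a / g s" 0] W_deriv a g_pos by simp
  have "((\<lambda>s. a / g s) has_real_derivative - (a * D) / (g s * g s)) (at s)"
    using DERIV_divide[OF DERIV_const g, of a] g_pos by simp
  from DERIV_mult[OF g DERIV_chain2[OF W_at this]]
  have "((\<lambda>s. g s * W (a / g s)) has_real_derivative
      D * W (a / g s) + W' (a / g s) * (- (a * D) / (g s * g s)) * g s) (at s)" .
  moreover have "D * W (a / g s) + W' (a / g s) * (- (a * D) / (g s * g s)) * g s
      = - D * phi W W' (a / g s)"
    using g_pos by (simp add: phi_def field_simps)
  ultimately show ?thesis by simp
qed

lemma sum_cyclic_shift_mult:
  fixes f F :: "nat \<Rightarrow> real" and N :: nat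
  assumes N: "N \<ge> 1"
  shows "(\<Sum>k<N. f (if Suc k < N then Suc k else 0) * F k)
       = (\<Sum>k<N. f k * F (if k = 0 then N - 1 else k - 1))"
proof -
  define next_idx where "next_idx k = (if Suc k < N then Suc k else 0)" for k
  define prev_idx where "prev_idx k = (if k = 0 then N - 1 else k - 1)" for k
  have "bij_betw next_idx {..<N} {..<N}"
    by (rule bij_betw_byWitness[where f' = prev_idx]) (use N in \<open>auto simp: next_idx_def prev_idx_def\<close>)
  then have "(\<Sum>k<N. f k * F (prev_idx k)) = (\<Sum>k<N. f (next_idx k) * F (prev_idx (next_idx k)))"
    by (rule sum.reindex_bij_betw[symmetric])
  also have "\<dots> = (\<Sum>k<N. f (next_idx k) * F k)"
  proof (rule sum.cong[OF refl])
    fix k assume "k \<in> {..<N}"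
    then have "prev_idx (next_idx k) = k"
      by (cases "Suc k < N") (auto simp: next_idx_def prev_idx_def)
    then show "f (next_idx k) * F (prev_idx (next_idx k)) = f (next_idx k) * F k" by simp
  qed
  finally show ?thesis by (simp add: next_idx_def prev_idx_def)
qed

lemma particle_internal_energy_has_real_derivative:
  fixes W W' :: "real \<Rightarrow> real" and x :: "nat \<Rightarrow> real \<Rightarrow> real" and v :: "nat \<Rightarrow> real"
  assumes W_deriv: "\<forall>r\<ge>0. (W has_real_derivative W' r) (at r within {0..})"
    and N: "N \<ge> 1" and c: "c > 0"
    and x_deriv: "\<And>k. k < N \<Longrightarrow> ((\<lambda>s. x k s) has_real_derivative v k) (at s)"
    and gap_pos: "\<And>k. k < N \<Longrightarrow> x k s < nxt L N (\<lambda>i. x i s) k"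
  shows "((\<lambda>s. particle_internal_energy W L c N (\<lambda>i. x i s)) has_real_derivative
           (\<Sum>k<N. v k * (phi W W' (prho L c N (\<lambda>i. x i s) k)
                          - phi W W' (prho_prev L c N (\<lambda>i. x i s) k)))) (at s)"
proof -
  define next_idx where "next_idx k = (if Suc k < N then Suc k else 0)" for k
  define \<phi>\<rho> where "\<phi>\<rho> k = phi W W' (prho L c N (\<lambda>i. x i s) k)" for k
  have nxt_deriv: "((\<lambda>s. nxt L N (\<lambda>i. x i s) k) has_real_derivative v (next_idx k)) (at s)" for k
    using x_deriv[of "Suc k"] x_deriv[of 0] N
    by (cases "Suc k < N") (auto simp: nxt_def next_idx_def intro!: derivative_eq_intros)
  have prho_eq: "prho L c N y k = (c / real N) / (nxt L N y k - y k)" for y k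
    by (simp add: prho_def)
  have "((\<lambda>s. particle_internal_energy W L c N (\<lambda>i. x i s)) has_real_derivative
      (\<Sum>k<N. - (v (next_idx k) - v k) * \<phi>\<rho> k)) (at s)"
    unfolding particle_internal_energy_def prho_eq \<phi>\<rho>_def
    using N c gap_pos
    by (intro DERIV_sum cell_energy_has_real_derivative[OF W_deriv] derivative_intros nxt_deriv x_deriv) auto
  moreover have "(\<Sum>k<N. - (v (next_idx k) - v k) * \<phi>\<rho> k)
      = (\<Sum>k<N. v k * \<phi>\<rho> k) - (\<Sum>k<N. v (next_idx k) * \<phi>\<rho> k)"
    by (simp add: sum_subtractf[symmetric] algebra_simps)
  also have "(\<Sum>k<N. v (next_idx k) * \<phi>\<rho> k) = (\<Sum>k<N. v k * \<phi>\<rho> (if k = 0 then N - 1 else k - 1))"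
    unfolding next_idx_def by (rule sum_cyclic_shift_mult[OF N])
  also have "(\<Sum>k<N. v k * \<phi>\<rho> k) - \<dots>
      = (\<Sum>k<N. v k * (phi W W' (prho L c N (\<lambda>i. x i s) k) - phi W W' (prho_prev L c N (\<lambda>i. x i s) k)))"
    by (simp add: \<phi>\<rho>_def prho_prev_def sum_subtractf[symmetric] right_diff_distrib)
  ultimately show ?thesis by simp
qed

lemma drift_term_le_young:
  fixes a b c n :: real
  assumes "c > 0" "n > 0"
  shows "2 * c * ((- a - (n / c) * b) * b) \<le> c\<^sup>2 / n * a\<^sup>2 - n * b\<^sup>2"
proof -
  have "0 \<le> (c * a + n * b)\<^sup>2 / n" using assms by simp
  also have "\<dots> = (c\<^sup>2 / n * a\<^sup>2 - n * b\<^sup>2) - 2 * c * ((- a - (n / c) * b) * b)"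
    using assms by (simp add: power2_eq_square field_simps)
  finally show ?thesis by linarith
qed

lemma dissipation_young_bound:
  fixes A B :: "nat \<Rightarrow> real" and c M1 :: real and N :: nat
  assumes c: "c > 0" and N: "N \<ge> 1" and A: "\<And>k. k < N \<Longrightarrow> \<bar>A k\<bar> \<le> c * M1"
  shows "2 * c * (\<Sum>k<N. (- A k - (real N / c) * B k) * B k)
           \<le> c ^ 4 * M1\<^sup>2 - (\<Sum>k<N. real N * (B k)\<^sup>2)"
proof -
  have term_bound: "2 * c * ((- A k - (real N / c) * B k) * B k) \<le> c ^ 4 * M1\<^sup>2 / real N - real N * (B k)\<^sup>2"
    if k: "k < N" for k
  proof -
    have "\<bar>A k\<bar> \<le> \<bar>c * M1\<bar>" using A[OF k] abs_ge_self[of "c * M1"] by linarith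
    then have "(A k)\<^sup>2 \<le> (c * M1)\<^sup>2" by (simp only: abs_le_square_iff)
    then have "c\<^sup>2 / real N * (A k)\<^sup>2 \<le> c\<^sup>2 / real N * (c * M1)\<^sup>2"
      by (intro mult_left_mono) auto
    also have "\<dots> = c ^ 4 * M1\<^sup>2 / real N" by (simp add: field_simps)
    finally show ?thesis using drift_term_le_young[OF c, of "real N" "A k" "B k"] N by simp
  qed
  have "2 * c * (\<Sum>k<N. (- A k - (real N / c) * B k) * B k)
      \<le> (\<Sum>k<N. c ^ 4 * M1\<^sup>2 / real N - real N * (B k)\<^sup>2)"
    unfolding sum_distrib_left by (rule sum_mono) (use term_bound in auto)
  also have "\<dots> = c ^ 4 * M1\<^sup>2 - (\<Sum>k<N. real N * (B k)\<^sup>2)"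
    using N by (simp add: sum_subtractf)
  finally show ?thesis .
qed

lemma interaction_drift_abs_le:
  fixes K' :: "real \<Rightarrow> real" and z :: "nat \<Rightarrow> real" and c M1 :: real and N :: nat
  assumes K'_bound: "\<forall>z. \<bar>K' z\<bar> \<le> M1" and c: "c \<ge> 0" and N: "N \<ge> 1"
  shows "\<bar>(c / real N) * (\<Sum>j\<in>{..<N} - {k}. K' (z j))\<bar> \<le> c * M1"
proof -
  have "\<bar>\<Sum>j\<in>{..<N} - {k}. K' (z j)\<bar> \<le> (\<Sum>j\<in>{..<N} - {k}. \<bar>K' (z j)\<bar>)"
    by (rule sum_abs)
  also have "\<dots> \<le> (\<Sum>j\<in>{..<N} - {k}. M1)"
    by (rule sum_mono) (use K'_bound in auto)
  also have "\<dots> = real (card ({..<N} - {k})) * M1" by simp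
  also have "\<dots> \<le> real N * M1"
    using card_Diff1_le[of "{..<N}" k] K'_bound by (intro mult_right_mono) (auto intro: order_trans[OF abs_ge_zero])
  finally have "(c / real N) * \<bar>\<Sum>j\<in>{..<N} - {k}. K' (z j)\<bar> \<le> (c / real N) * (real N * M1)"
    using c by (intro mult_left_mono) auto
  with c N show ?thesis by (simp add: abs_mult)
qed

lemma particle_solution_gap_pos:
  assumes sol: "particle_solution K' \<phi> L \<rho>0 N T x" and k: "k < N" and s: "s \<in> {0..<T}"
  shows "x k s < nxt L N (\<lambda>i. x i s) k"
proof -
  have ordered: "\<forall>k. Suc k < N \<longrightarrow> x k s < x (Suc k) s" and wrap: "x (N - 1) s < x 0 s + L"
    using sol s unfolding particle_solution_def Let_def by auto
  show ?thesis
  proof (cases "Suc k < N")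
    case False
    with k have "k = N - 1" by simp
    with wrap False show ?thesis by (simp add: nxt_def)
  qed (use ordered in \<open>simp add: nxt_def\<close>)
qed

lemma particle_solution_velocity:
  assumes "particle_solution K' \<phi> L \<rho>0 N T x" and "k < N" and "s \<in> {0..<T}"
  shows "((\<lambda>s. x k s) has_real_derivative
           - (cmass L \<rho>0 / real N) * (\<Sum>j\<in>{..<N} - {k}. K' (tred L (x k s - x j s)))
           - (real N / cmass L \<rho>0) * (\<phi> (prho L (cmass L \<rho>0) N (\<lambda>i. x i s) k)
                                      - \<phi> (prho_prev L (cmass L \<rho>0) N (\<lambda>i. x i s) k)))
         (at s within {0..<T})"
  using assms unfolding particle_solution_def Let_def by blast

lemma particle_solution_continuous_on_gap:
  assumes sol: "particle_solution K' \<phi> L \<rho>0 N T x" and k: "k < N"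
  shows "continuous_on {0..<T} (\<lambda>s. nxt L N (\<lambda>i. x i s) k - x k s)"
proof -
  have x_cont: "continuous_on {0..<T} (\<lambda>s. x j s)" if "j < N" for j
    unfolding continuous_on_eq_continuous_within
    using particle_solution_velocity[OF sol that] by (blast intro: DERIV_continuous)
  show ?thesis
    using x_cont[OF k] x_cont[of "Suc k"] x_cont[of 0] k
    by (cases "Suc k < N") (simp_all add: nxt_def continuous_on_diff continuous_on_add)
qed

lemma particle_solution_continuous_on_prho:
  assumes sol: "particle_solution K' \<phi> L \<rho>0 N T x" and k: "k < N"
    and c_pos: "cmass L \<rho>0 > 0" and f_cont: "continuous_on {0<..} f"
  shows "continuous_on {0..<T} (\<lambda>s. f (prho L (cmass L \<rho>0) N (\<lambda>i. x i s) k))"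
proof -
  have gap_pos: "nxt L N (\<lambda>i. x i s) k - x k s > 0" if "s \<in> {0..<T}" for s
    using particle_solution_gap_pos[OF sol k that] by simp
  have "continuous_on {0..<T} (\<lambda>s. prho L (cmass L \<rho>0) N (\<lambda>i. x i s) k)"
    unfolding prho_def
    by (rule continuous_on_divide[OF continuous_on_const
          continuous_on_mult[OF continuous_on_const particle_solution_continuous_on_gap[OF sol k]]])
       (use gap_pos k in fastforce)+
  moreover have "prho L (cmass L \<rho>0) N (\<lambda>i. x i s) k \<in> {0<..}" if "s \<in> {0..<T}" for s
    using gap_pos[OF that] c_pos k by (simp add: prho_def)
  ultimately show ?thesis
    by (intro continuous_on_compose2[OF f_cont]) auto
qed

definition dissipation :: "(real \<Rightarrow> real) \<Rightarrow> real \<Rightarrow> real \<Rightarrow> nat \<Rightarrow> (nat \<Rightarrow> real) \<Rightarrow> real" where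
  "dissipation \<phi> L c N y = (\<Sum>k<N. real N * (\<phi> (prho L c N y k) - \<phi> (prho_prev L c N y k))\<^sup>2)"

lemma particle_solution_continuous_on_dissipation:
  assumes sol: "particle_solution K' \<phi> L \<rho>0 N T x"
    and c_pos: "cmass L \<rho>0 > 0" and \<phi>_cont: "continuous_on {0<..} \<phi>"
  shows "continuous_on {0..<T} (\<lambda>s. dissipation \<phi> L (cmass L \<rho>0) N (\<lambda>i. x i s))"
  unfolding dissipation_def prho_prev_def
  by (intro continuous_intros particle_solution_continuous_on_prho[OF sol _ c_pos \<phi>_cont]) auto

lemma particle_solution_continuous_on_internal_energy:
  assumes sol: "particle_solution K' \<phi> L \<rho>0 N T x"
    and c_pos: "cmass L \<rho>0 > 0" and W_cont: "continuous_on {0<..} W"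
  shows "continuous_on {0..<T} (\<lambda>s. particle_internal_energy W L (cmass L \<rho>0) N (\<lambda>i. x i s))"
  unfolding particle_internal_energy_def
  by (intro continuous_intros particle_solution_continuous_on_prho[OF sol _ c_pos W_cont]
        particle_solution_continuous_on_gap[OF sol]) auto

lemma particle_internal_energy_nonneg:
  assumes sol: "particle_solution K' \<phi> L \<rho>0 N T x"
    and c_pos: "cmass L \<rho>0 > 0" and W_nonneg: "\<forall>r\<ge>0. W r \<ge> 0" and s: "s \<in> {0..<T}"
  shows "0 \<le> particle_internal_energy W L (cmass L \<rho>0) N (\<lambda>i. x i s)"
  unfolding particle_internal_energy_def
proof (rule sum_nonneg)
  fix k assume "k \<in> {..<N}"
  then have "x k s < nxt L N (\<lambda>i. x i s) k" using particle_solution_gap_pos[OF sol _ s] by simp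
  with c_pos W_nonneg show "0 \<le> (nxt L N (\<lambda>i. x i s) k - x k s) * W (prho L (cmass L \<rho>0) N (\<lambda>i. x i s) k)"
    by (simp add: prho_def)
qed

lemma particle_energy_dissipation_inequality:
  fixes K' W W' :: "real \<Rightarrow> real" and x :: "nat \<Rightarrow> real \<Rightarrow> real"
  assumes W_deriv: "\<forall>r\<ge>0. (W has_real_derivative W' r) (at r within {0..})"
    and K'_bound: "\<forall>z. \<bar>K' z\<bar> \<le> M1"
    and sol: "particle_solution K' (phi W W') L \<rho>0 N T x"
    and N: "N \<ge> 1" and c_pos: "cmass L \<rho>0 > 0" and u: "0 < u" "u < T"
  shows "\<exists>D. ((\<lambda>s. particle_internal_energy W L (cmass L \<rho>0) N (\<lambda>i. x i s)) has_real_derivative D) (at u)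
           \<and> 2 * cmass L \<rho>0 * D
               \<le> cmass L \<rho>0 ^ 4 * M1\<^sup>2 - dissipation (phi W W') L (cmass L \<rho>0) N (\<lambda>i. x i u)"
proof -
  define c where "c = cmass L \<rho>0"
  define A where "A k = (c / real N) * (\<Sum>j\<in>{..<N} - {k}. K' (tred L (x k u - x j u)))" for k
  define B where "B k = phi W W' (prho L c N (\<lambda>i. x i u) k) - phi W W' (prho_prev L c N (\<lambda>i. x i u) k)"
    for k
  define V where "V k = - A k - (real N / c) * B k" for k
  have c: "c > 0" using c_pos by (simp add: c_def)
  have u_T: "u \<in> {0..<T}" using u by simp
  have "at u within {0..<T} = at u" by (rule at_within_interior) (use u in simp)
  then have x_deriv: "((\<lambda>s. x k s) has_real_derivative V k) (at u)" if "k < N" for k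
    using particle_solution_velocity[OF sol that u_T] by (simp add: V_def A_def B_def c_def)
  have "((\<lambda>s. particle_internal_energy W L c N (\<lambda>i. x i s)) has_real_derivative (\<Sum>k<N. V k * B k)) (at u)"
    using particle_internal_energy_has_real_derivative[OF W_deriv N c x_deriv
        particle_solution_gap_pos[OF sol _ u_T]]
    by (simp add: B_def)
  moreover have "2 * c * (\<Sum>k<N. V k * B k) \<le> c ^ 4 * M1\<^sup>2 - dissipation (phi W W') L c N (\<lambda>i. x i u)"
    using dissipation_young_bound[OF c N, of A M1 B] interaction_drift_abs_le[OF K'_bound _ N] c
    by (simp add: V_def A_def B_def dissipation_def)
  ultimately show ?thesis by (auto simp: c_def)
qed

section \<open>Integration in time\<close>

lemma integral_le_of_has_real_derivative_le:
  fixes f Q :: "real \<Rightarrow> real" and \<alpha> t :: real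
  assumes t: "0 \<le> t" and f_cont: "continuous_on {0..t} f" and Q_cont: "continuous_on {0..t} Q"
    and f_deriv: "\<And>u. 0 < u \<Longrightarrow> u < t \<Longrightarrow> \<exists>D. (f has_real_derivative D) (at u) \<and> D \<le> \<alpha> - Q u"
  shows "integral {0..t} Q \<le> f 0 - f t + \<alpha> * t"
proof -
  define \<Phi> where "\<Phi> u = f u + integral {0..u} Q - \<alpha> * u" for u
  have "\<Phi> t \<le> \<Phi> 0"
  proof (rule DERIV_nonpos_imp_decreasing_open[OF t])
    fix u assume u: "0 < u" "u < t"
    then obtain D where D: "(f has_real_derivative D) (at u)" "D \<le> \<alpha> - Q u"
      using f_deriv by blast
    have "at u within {0..t} = at u" by (rule at_within_interior) (use u in simp)
    then have "((\<lambda>u. integral {0..u} Q) has_real_derivative Q u) (at u)"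
      using integral_has_real_derivative[OF Q_cont, of u] u by simp
    then have "(\<Phi> has_real_derivative D + Q u - \<alpha>) (at u)"
      unfolding \<Phi>_def[abs_def] by (auto intro!: derivative_eq_intros D(1))
    with D(2) show "\<exists>y. (\<Phi> has_real_derivative y) (at u) \<and> y \<le> 0" by force
  next
    show "continuous_on {0..t} \<Phi>"
      unfolding \<Phi>_def[abs_def]
      by (intro continuous_intros f_cont indefinite_integral_continuous_1 integrable_continuous_real Q_cont)
  qed
  then show ?thesis by (simp add: \<Phi>_def)
qed

lemma exhausting_sequence_atLeastLessThan:
  fixes T :: real
  assumes T: "T > 0"
  obtains \<tau> :: "nat \<Rightarrow> real" where "\<And>n. 0 \<le> \<tau> n" "\<And>n. \<tau> n < T" "\<And>n. \<tau> n \<le> \<tau> (Suc n)"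
    and "\<And>s. s < T \<Longrightarrow> \<exists>n. s \<le> \<tau> n"
proof
  define \<tau> where "\<tau> n = T - T / real (Suc (Suc n))" for n
  show "0 \<le> \<tau> n" "\<tau> n < T" for n using T by (auto simp: \<tau>_def field_simps)
  show "\<tau> n \<le> \<tau> (Suc n)" for n using T by (simp add: \<tau>_def frac_le)
  show "\<exists>n. s \<le> \<tau> n" if "s < T" for s
  proof -
    obtain n :: nat where "T / (T - s) < real n" using reals_Archimedean2 by blast
    with that have "T < real (Suc (Suc n)) * (T - s)" by (simp add: divide_less_eq algebra_simps)
    then have "T / real (Suc (Suc n)) < T - s" by (simp add: pos_divide_less_eq mult.commute)
    then have "s \<le> \<tau> n" by (simp add: \<tau>_def)
    then show ?thesis ..
  qed
qed

lemma nn_integral_Icc_eq_integral: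
  fixes Q :: "real \<Rightarrow> real" and a b :: real
  assumes Q_cont: "continuous_on {a..b} Q" and Q_nonneg: "\<And>s. s \<in> {a..b} \<Longrightarrow> 0 \<le> Q s"
  shows "(\<integral>\<^sup>+ s. ennreal (Q s) * indicator {a..b} s \<partial>lborel) = ennreal (integral {a..b} Q)"
    and "(\<lambda>s. ennreal (Q s) * indicator {a..b} s) \<in> borel_measurable lborel"
proof -
  have Q_has_integral: "(Q has_integral integral {a..b} Q) {a..b}"
    using Q_cont by (intro integrable_integral integrable_continuous_real)
  show "(\<integral>\<^sup>+ s. ennreal (Q s) * indicator {a..b} s \<partial>lborel) = ennreal (integral {a..b} Q)"
    by (rule nn_integral_has_integral_lebesgue'[OF _ Q_has_integral]) (rule Q_nonneg)
  have "(\<lambda>s. indicator {a..b} s *\<^sub>R Q s) \<in> borel_measurable borel"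
    using Q_cont by (rule borel_measurable_continuous_on_indicator[rotated]) simp
  then have "(\<lambda>s. ennreal (indicator {a..b} s *\<^sub>R Q s)) \<in> borel_measurable borel" by measurable
  moreover have "(\<lambda>s. ennreal (indicator {a..b} s *\<^sub>R Q s)) = (\<lambda>s. ennreal (Q s) * indicator {a..b} s)"
    by (auto simp: indicator_def)
  ultimately show "(\<lambda>s. ennreal (Q s) * indicator {a..b} s) \<in> borel_measurable lborel" by simp
qed

lemma nn_integral_atLeastLessThan_le:
  fixes Q :: "real \<Rightarrow> real" and T B :: real
  assumes T: "T > 0" and Q_cont: "continuous_on {0..<T} Q"
    and Q_nonneg: "\<And>s. s \<in> {0..<T} \<Longrightarrow> 0 \<le> Q s"
    and Q_integral: "\<And>t. 0 \<le> t \<Longrightarrow> t < T \<Longrightarrow> integral {0..t} Q \<le> B"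
  shows "(\<integral>\<^sup>+ s\<in>{0..<T}. ennreal (Q s) \<partial>lborel) \<le> ennreal B"
proof -
  obtain \<tau> :: "nat \<Rightarrow> real" where \<tau>: "\<And>n. 0 \<le> \<tau> n" "\<And>n. \<tau> n < T"
    and \<tau>_mono: "\<And>n. \<tau> n \<le> \<tau> (Suc n)" and \<tau>_exhaust: "\<And>s. s < T \<Longrightarrow> \<exists>n. s \<le> \<tau> n"
    using exhausting_sequence_atLeastLessThan[OF T] by blast
  define f where "f n s = ennreal (Q s) * indicator {0..\<tau> n} s" for n s
  have Q_cont_\<tau>: "continuous_on {0..\<tau> n} Q" for n
    using Q_cont \<tau>(2)[of n] by (auto intro: continuous_on_subset)
  have Q_nonneg_\<tau>: "0 \<le> Q s" if "s \<in> {0..\<tau> n}" for n s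
    using Q_nonneg \<tau>(2)[of n] that by simp
  have f_integral: "integral\<^sup>N lborel (f n) = ennreal (integral {0..\<tau> n} Q)"
    and f_meas: "f n \<in> borel_measurable lborel" for n
    using nn_integral_Icc_eq_integral[OF Q_cont_\<tau>[of n] Q_nonneg_\<tau>[where n = n]] by (simp_all add: f_def[abs_def])
  have f_mono: "incseq f"
  proof (intro incseq_SucI le_funI)
    fix n s
    show "f n s \<le> f (Suc n) s"
      using order_trans[OF _ \<tau>_mono[of n], of s] by (auto simp: f_def indicator_def)
  qed
  have "ennreal (Q s) * indicator {0..<T} s = (SUP n. f n s)" for s
  proof (cases "s \<in> {0..<T}")
    case True
    then obtain n where "s \<le> \<tau> n" using \<tau>_exhaust by auto
    with True have "f n s = ennreal (Q s)" by (simp add: f_def)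
    moreover have "f m s \<le> ennreal (Q s)" for m by (simp add: f_def indicator_def)
    ultimately have "(SUP n. f n s) = ennreal (Q s)" by (intro antisym SUP_least SUP_upper2[of n]) auto
    with True show ?thesis by simp
  next
    case False
    then have "f n s = 0" for n using \<tau>(2)[of n] by (auto simp: f_def)
    with False show ?thesis by simp
  qed
  then have "(\<integral>\<^sup>+ s\<in>{0..<T}. ennreal (Q s) \<partial>lborel) = (SUP n. integral\<^sup>N lborel (f n))"
    using nn_integral_monotone_convergence_SUP[OF f_mono f_meas] by simp
  also have "\<dots> \<le> ennreal B"
    using f_integral Q_integral[OF \<tau>] by (intro SUP_least) (simp add: ennreal_leI)
  finally show ?thesis .
qed

lemma particle_dissipation_integral_le:
  fixes K' W W' \<phi>' :: "real \<Rightarrow> real" and x :: "nat \<Rightarrow> real \<Rightarrow> real"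
  assumes W_deriv: "\<forall>r\<ge>0. (W has_real_derivative W' r) (at r within {0..})"
    and phi_deriv: "\<forall>r\<ge>0. (phi W W' has_real_derivative \<phi>' r) (at r within {0..})"
    and W_nonneg: "\<forall>r\<ge>0. W r \<ge> 0"
    and K'_bound: "\<forall>z. \<bar>K' z\<bar> \<le> M1"
    and sol: "particle_solution K' (phi W W') L \<rho>0 N T x"
    and N: "N \<ge> 1" and c_pos: "cmass L \<rho>0 > 0" and t: "0 \<le> t" "t < T"
  shows "integral {0..t} (\<lambda>s. dissipation (phi W W') L (cmass L \<rho>0) N (\<lambda>i. x i s))
           \<le> 2 * cmass L \<rho>0 * particle_internal_energy W L (cmass L \<rho>0) N (\<lambda>i. x i 0)
             + cmass L \<rho>0 ^ 4 * M1\<^sup>2 * t"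
proof -
  define c where "c = cmass L \<rho>0"
  define Q where "Q s = dissipation (phi W W') L c N (\<lambda>i. x i s)" for s
  define E where "E s = particle_internal_energy W L c N (\<lambda>i. x i s)" for s
  have sub: "{0..t} \<subseteq> {0..<T}" using t by auto
  have Q_cont: "continuous_on {0..t} Q"
    using particle_solution_continuous_on_dissipation[OF sol c_pos
        DERIV_within_atLeast_imp_continuous_on_greaterThan[OF phi_deriv]]
    unfolding Q_def c_def by (rule continuous_on_subset[OF _ sub])
  have E_cont: "continuous_on {0..t} (\<lambda>s. 2 * c * E s)"
    using particle_solution_continuous_on_internal_energy[OF sol c_pos
        DERIV_within_atLeast_imp_continuous_on_greaterThan[OF W_deriv]]
    unfolding E_def c_def by (intro continuous_on_mult_left continuous_on_subset[OF _ sub])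
  have E_deriv: "\<exists>D. ((\<lambda>s. 2 * c * E s) has_real_derivative D) (at u) \<and> D \<le> c ^ 4 * M1\<^sup>2 - Q u"
    if "0 < u" "u < t" for u
    using particle_energy_dissipation_inequality[OF W_deriv K'_bound sol N c_pos, of u] that t
    by (auto simp: E_def[abs_def] Q_def c_def intro: DERIV_cmult)
  have "0 \<le> E t" using particle_internal_energy_nonneg[OF sol c_pos W_nonneg] t by (simp add: E_def c_def)
  with c_pos have "0 \<le> 2 * c * E t" by (simp add: c_def)
  moreover have "integral {0..t} Q \<le> 2 * c * E 0 - 2 * c * E t + c ^ 4 * M1\<^sup>2 * t"
    by (rule integral_le_of_has_real_derivative_le[OF t(1) E_cont Q_cont E_deriv])
  ultimately have "integral {0..t} Q \<le> 2 * c * E 0 + c ^ 4 * M1\<^sup>2 * t" by linarith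
  then show ?thesis by (simp add: Q_def[abs_def] E_def c_def)
qed

lemma particle_solution_initial_energy_le:
  fixes K K' W W' \<rho>0 :: "real \<Rightarrow> real" and x :: "nat \<Rightarrow> real \<Rightarrow> real"
  assumes W_deriv: "\<forall>r\<ge>0. (W has_real_derivative W' r) (at r within {0..})"
    and phi_0: "phi W W' 0 = 0" and phi_mono: "strict_mono_on {0..} (phi W W')"
    and W_nonneg: "\<forall>r\<ge>0. W r \<ge> 0" and K_bound: "\<forall>z. \<bar>K z\<bar> \<le> M"
    and L: "L > 0" and nonneg: "\<forall>y\<in>torus_dom L. \<rho>0 y \<ge> 0"
    and \<rho>0_int: "set_integrable lborel (torus_dom L) \<rho>0"
    and W\<rho>0_int: "set_integrable lborel (torus_dom L) (\<lambda>y. W (\<rho>0 y))"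
    and mass_le_1: "cmass L \<rho>0 \<le> 1" and c_pos: "cmass L \<rho>0 > 0"
    and sol: "particle_solution K' (phi W W') L \<rho>0 N T x" and N: "N \<ge> 1" and T: "T > 0"
  shows "particle_internal_energy W L (cmass L \<rho>0) N (\<lambda>i. x i 0) \<le> FL K W L \<rho>0 + M / 2"
proof -
  have "0 \<in> {0..<T}" using T by simp
  with sol have init: "\<forall>k<N. x k 0 = init_pos L \<rho>0 N k"
    and ordered: "\<forall>k. Suc k < N \<longrightarrow> x k 0 < x (Suc k) 0" and wrap: "x (N - 1) 0 < x 0 0 + L"
    unfolding particle_solution_def Let_def by blast+
  have "particle_internal_energy W L (cmass L \<rho>0) N (\<lambda>i. x i 0) \<le> (LINT y:torus_dom L|lborel. W (\<rho>0 y))"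
    by (rule particle_internal_energy_init_le[OF W_deriv phi_0 phi_mono W_nonneg L nonneg \<rho>0_int W\<rho>0_int
          c_pos N init ordered wrap])
  also have "\<dots> \<le> FL K W L \<rho>0 + M / 2"
    by (rule internal_energy_le_FL[OF K_bound nonneg \<rho>0_int mass_le_1])
  finally show ?thesis .
qed

lemma particle_dissipation_nn_integral_le:
  fixes K K' W W' \<phi>' \<rho>0 :: "real \<Rightarrow> real" and x :: "nat \<Rightarrow> real \<Rightarrow> real"
  assumes W_deriv: "\<forall>r\<ge>0. (W has_real_derivative W' r) (at r within {0..})"
    and phi_deriv: "\<forall>r\<ge>0. (phi W W' has_real_derivative \<phi>' r) (at r within {0..})"
    and phi_0: "phi W W' 0 = 0" and phi_mono: "strict_mono_on {0..} (phi W W')"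
    and W_nonneg: "\<forall>r\<ge>0. W r \<ge> 0"
    and K_bound: "\<forall>z. \<bar>K z\<bar> \<le> M" and K'_bound: "\<forall>z. \<bar>K' z\<bar> \<le> M1"
    and T: "T > 0" and L: "L > 0"
    and nonneg: "\<forall>y\<in>torus_dom L. \<rho>0 y \<ge> 0"
    and \<rho>0_int: "set_integrable lborel (torus_dom L) \<rho>0"
    and W\<rho>0_int: "set_integrable lborel (torus_dom L) (\<lambda>y. W (\<rho>0 y))"
    and mass_le_1: "cmass L \<rho>0 \<le> 1" and FL_le: "FL K W L \<rho>0 \<le> C0"
    and sol: "particle_solution K' (phi W W') L \<rho>0 N T x" and N: "N \<ge> 1"
  shows "(\<integral>\<^sup>+ t\<in>{0..<T}. ennreal (dissipation (phi W W') L (cmass L \<rho>0) N (\<lambda>i. x i t)) \<partial>lborel)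
           \<le> ennreal ((2 * C0 + M + M1\<^sup>2) * (1 + T))"
proof (cases "cmass L \<rho>0 = 0")
  case True
  then show ?thesis by (simp add: dissipation_def prho_prev_def prho_def)
next
  case False
  define c where "c = cmass L \<rho>0"
  with False cmass_nonneg[OF nonneg] mass_le_1 have c: "0 < c" "c \<le> 1" by auto
  define E0 where "E0 = particle_internal_energy W L c N (\<lambda>i. x i 0)"
  have E0_le: "E0 \<le> C0 + M / 2"
    using particle_solution_initial_energy_le[OF W_deriv phi_0 phi_mono W_nonneg K_bound L nonneg \<rho>0_int
        W\<rho>0_int mass_le_1 _ sol N T] c FL_le by (simp add: E0_def c_def)
  have E0_nonneg: "0 \<le> E0"
    using particle_internal_energy_nonneg[OF sol _ W_nonneg, of 0] c T by (simp add: E0_def c_def)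
  have "integral {0..t} (\<lambda>s. dissipation (phi W W') L c N (\<lambda>i. x i s)) \<le> (2 * C0 + M + M1\<^sup>2) * (1 + T)"
    if t: "0 \<le> t" "t < T" for t
  proof -
    have "integral {0..t} (\<lambda>s. dissipation (phi W W') L c N (\<lambda>i. x i s)) \<le> 2 * c * E0 + c ^ 4 * M1\<^sup>2 * t"
      using particle_dissipation_integral_le[OF W_deriv phi_deriv W_nonneg K'_bound sol N _ t] c
      by (simp add: c_def E0_def)
    also have "\<dots> \<le> 2 * E0 + M1\<^sup>2 * T"
    proof (rule add_mono)
      show "2 * c * E0 \<le> 2 * E0" using c E0_nonneg by (simp add: mult_left_le_one_le)
      have "c ^ 4 * M1\<^sup>2 \<le> M1\<^sup>2" using c by (intro mult_left_le_one_le power_le_one) auto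
      then show "c ^ 4 * M1\<^sup>2 * t \<le> M1\<^sup>2 * T" using t by (intro mult_mono) auto
    qed
    also have "\<dots> \<le> (2 * C0 + M) + (2 * C0 + M + M1\<^sup>2) * T"
      using E0_le E0_nonneg T by (intro add_mono mult_right_mono) auto
    also have "\<dots> \<le> (2 * C0 + M + M1\<^sup>2) * (1 + T)"
      by (simp add: algebra_simps)
    finally show ?thesis .
  qed
  moreover have "continuous_on {0..<T} (\<lambda>s. dissipation (phi W W') L c N (\<lambda>i. x i s))"
    using particle_solution_continuous_on_dissipation[OF sol _
        DERIV_within_atLeast_imp_continuous_on_greaterThan[OF phi_deriv]] c
    by (simp add: c_def)
  ultimately show ?thesis
    unfolding c_def[symmetric]
    by (intro nn_integral_atLeastLessThan_le[OF T]) (auto simp: dissipation_def sum_nonneg)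
qed

theorem lemma4p2:
  fixes K K' K'' W W' \<phi>' :: "real \<Rightarrow> real"
    and c0 c1 c2 \<rho>hat \<rho>bar :: real
  assumes K_even: "\<forall>z. K z = K \<bar>z\<bar>"
    and K_cont: "continuous_on UNIV K"
    and K_deriv: "\<forall>z. z \<noteq> 0 \<longrightarrow> (K has_real_derivative K' z) (at z)"
    and K'_deriv: "\<forall>z. z \<noteq> 0 \<longrightarrow> (K' has_real_derivative K'' z) (at z)"
    and K''_cont: "continuous_on (- {0}) K''"
    and K_bdd: "\<exists>M. \<forall>z. \<bar>K z\<bar> \<le> M"
    and K'_bdd: "\<exists>M. \<forall>z. z \<noteq> 0 \<longrightarrow> \<bar>K' z\<bar> \<le> M"
    and K''_bdd: "\<exists>M. \<forall>z. z \<noteq> 0 \<longrightarrow> \<bar>K'' z\<bar> \<le> M"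
    and K'_L1: "integrable lborel K'"
    and W_nonneg: "\<forall>r\<ge>0. W r \<ge> 0"
    and W_deriv: "\<forall>r\<ge>0. (W has_real_derivative W' r) (at r within {0..})"
    and phi_deriv: "\<forall>r\<ge>0. (phi W W' has_real_derivative \<phi>' r) (at r within {0..})"
    and phi'_cont: "continuous_on {0..} \<phi>'"
    and phi_0: "phi W W' 0 = 0"
    and phi_mono: "strict_mono_on {0..} (phi W W')"
    and c0_pos: "c0 > 0"
    and phi_c0: "\<forall>r\<ge>0. \<phi>' r * r \<le> c0 * phi W W' r"
    and phi_max: "\<forall>r\<ge>0. phi W W' r \<le> max r (c0 * W r)"
    and c1_pos: "c1 > 0" and c2_pos: "c2 > 0"
    and rho_hat: "\<rho>hat < 1" and rho_bar: "1 < \<rho>bar"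
    and phi_small: "\<forall>r. 0 \<le> r \<and> r \<le> \<rho>hat \<longrightarrow> phi W W' r \<le> c1 * r"
    and phi_large: "\<forall>r. r \<ge> \<rho>bar \<longrightarrow> phi W W' r \<ge> c2 * r"
  shows "\<forall>C0>0. \<exists>C. \<forall>T>0. \<forall>L>0. \<exists>Nbar::nat.
           \<forall>(\<rho>0::real \<Rightarrow> real) (x::nat \<Rightarrow> nat \<Rightarrow> real \<Rightarrow> real).
             (\<forall>y\<in>torus_dom L. \<rho>0 y \<ge> 0) \<and>
             set_integrable lborel (torus_dom L) \<rho>0 \<and>
             cmass L \<rho>0 \<le> 1 \<and>
             set_integrable lborel (torus_dom L) (\<lambda>y. W (\<rho>0 y)) \<and>
             FL K W L \<rho>0 \<le> C0 \<and>
             (\<forall>N\<ge>Nbar. particle_solution K' (phi W W') L \<rho>0 N T (x N))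
             \<longrightarrow>
             (\<forall>N\<ge>Nbar.
                (\<integral>\<^sup>+ t\<in>{0..<T}.
                   ennreal (\<Sum>k<N. real N *
                     (phi W W' (prho L (cmass L \<rho>0) N (\<lambda>i. x N i t) k)
                      - phi W W' (prho_prev L (cmass L \<rho>0) N (\<lambda>i. x N i t) k))\<^sup>2) \<partial>lborel)
                \<le> ennreal (C * (1 + T)))"
proof -
  obtain M where K_bound: "\<forall>z. \<bar>K z\<bar> \<le> M" using K_bdd by blast
  obtain M1' where "\<forall>z. z \<noteq> 0 \<longrightarrow> \<bar>K' z\<bar> \<le> M1'" using K'_bdd by blast
  \<comment> \<open>K' is only bounded off 0; its arbitrary value at 0 is absorbed into the bound.\<close>
  then have K'_bound: "\<forall>z. \<bar>K' z\<bar> \<le> max M1' \<bar>K' 0\<bar>" by (metis max.cobounded1 max.cobounded2 order_trans)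
  note bound = particle_dissipation_nn_integral_le[OF W_deriv phi_deriv phi_0 phi_mono W_nonneg K_bound K'_bound,
      unfolded dissipation_def]
  show ?thesis
    using bound by blast
qed

end
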